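(* Let $\|\cdot\|$ be an arbitrary seminorm on $\mathbb{R}^n$, let $\gamma>0$ and $\alpha\ge1$ be constants, and let $A$ be a deterministic or randomized online algorithm. Then there is a class $\mathfrak{C}$ containing two cost functions such that either $R_0(A)=\Omega(T)$, or, for all sufficiently large $T$, both $CR^\alpha_0(A)\ge\gamma$ and $CD^\alpha_0(A)\ge\gamma T$.
   Context: Smoothed online convex optimization (SOCO): a convex decision space $F\subseteq(\mathbb{R}^+)^n$ and a seminorm $\|\cdot\|$ on $\mathbb{R}^n$ are fixed. An online (possibly randomized) algorithm $A$ faces a sequence of cost functions $c^1,c^2,\dots$ with $c^t:F\to\mathbb{R}^+$, and produces decisions $x^1,x^2,\dots\in F$, where $x^s$ may depend only on $c^1,\dots,c^{s-1}$ and on the algorithm's internal randomness. For $\alpha\ge 0$ and lookahead $i\in\mathbb{N}$, the $\alpha$-penalized cost with lookahead $i$ over horizon $T$ is $C_i^\alpha(A)=\mathbb{E}\big[\sum_{t=1}^T c^t(x^{t+i})+\alpha\|x^{t+i}-x^{t+i-1}\|\big]$, with initial action $x^i=0$ and expectation over the algorithm's randomness; write $C_i=C_i^1$. The static optimum is $OPT_s=\min_{x\in F}\sum_{t=1}^T c^t(x)$, and for $\alpha\ge1$ the $\alpha$-unfair dynamic optimum is $OPT_d^\alpha=\min_{(x^1,\dots,x^T)\in F^T}\sum_{t=1}^T c^t(x^t)+\alpha\|x^t-x^{t-1}\|$ (with $x^0=0$). For a class $\mathfrak{C}$ of cost functions: the regret $R_i(A)$ is (at most) $\rho(T)$ if for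 every sequence $(c^1,\dots,c^T)\in\mathfrak{C}^T$, $C_i^0(A)-OPT_s\le\rho(T)$; the $\alpha$-unfair competitive ratio $CR_i^\alpha(A)$ is $\rho(T)$ if for every such sequence $C_i(A)\le\rho(T)\,OPT_d^\alpha+O(1)$; the $\alpha$-unfair competitive difference $CD_i^\alpha(A)$ is $\rho(T)$ if for every such sequence $C_i(A)-OPT_d^\alpha\le\rho(T)$. Statements such as $R_0(A)=\Omega(T)$ or $CR_0^\alpha(A)\ge\gamma$ refer to the best (smallest) $\rho(T)$ for which the corresponding guarantee holds over all sequences from $\mathfrak{C}$. *)

theory Defs
  imports "HOL-Probability.Probability"
begin

type_synonym 'n cost = "real ^ 'n \<Rightarrow> real"

definition seminorm :: "(real ^ 'n \<Rightarrow> real) \<Rightarrow> bool" where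
  "seminorm N \<longleftrightarrow> (\<forall>x y. N (x + y) \<le> N x + N y) \<and> (\<forall>c x. N (c *\<^sub>R x) = \<bar>c\<bar> * N x)"

definition decision_space :: "(real ^ 'n) set \<Rightarrow> bool" where
  "decision_space F \<longleftrightarrow> convex F \<and> F \<noteq> {} \<and> F \<subseteq> {x. \<forall>i. 0 \<le> x $ i}"

text \<open>Online (possibly randomized) algorithm on F: a probability space M of internal
  randomness and a decision rule A; the decision for the (t+1)-st round is
  A w [c^1,...,c^t], i.e. it depends only on the earlier cost functions.
  A deterministic algorithm is the case of a one-point (Dirac) probability space.\<close>
definition online_alg :: "(real ^ 'n) set \<Rightarrow> 'w measure \<Rightarrow> ('w \<Rightarrow> 'n cost list \<Rightarrow> real ^ 'n) \<Rightarrow> bool" where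
  "online_alg F M A \<longleftrightarrow> prob_space M \<and> (\<forall>w\<in>space M. \<forall>l. A w l \<in> F)
     \<and> (\<forall>l. (\<lambda>w. A w l) \<in> borel_measurable M)"

text \<open>Penalized cost of a trajectory x (0-based: x t is the action for cs ! t,
  the action before the first round is 0).\<close>
definition path_cost :: "(real ^ 'n \<Rightarrow> real) \<Rightarrow> real \<Rightarrow> 'n cost list \<Rightarrow> (nat \<Rightarrow> real ^ 'n) \<Rightarrow> real" where
  "path_cost N a cs x = (\<Sum>t<length cs. (cs ! t) (x t) + a * N (x t - (if t = 0 then 0 else x (t - 1))))"

text \<open>Expected a-penalized cost with lookahead 0, C_0^a(A), as an extended real.\<close>
definition alg_cost :: "(real ^ 'n \<Rightarrow> real) \<Rightarrow> real \<Rightarrow> 'w measure \<Rightarrow> ('w \<Rightarrow> 'n cost list \<Rightarrow> real ^ 'n)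
    \<Rightarrow> 'n cost list \<Rightarrow> ereal" where
  "alg_cost N a M A cs = enn2ereal (\<integral>\<^sup>+ w. ennreal (path_cost N a cs (\<lambda>t. A w (take t cs))) \<partial>M)"

definition OPT_s :: "(real ^ 'n) set \<Rightarrow> 'n cost list \<Rightarrow> real" where
  "OPT_s F cs = (INF x\<in>F. \<Sum>t<length cs. (cs ! t) x)"

definition OPT_d :: "(real ^ 'n \<Rightarrow> real) \<Rightarrow> real \<Rightarrow> (real ^ 'n) set \<Rightarrow> 'n cost list \<Rightarrow> real" where
  "OPT_d N a F cs = (INF x\<in>{x. \<forall>t<length cs. x t \<in> F}. path_cost N a cs x)"

definition seqs :: "'n cost set \<Rightarrow> nat \<Rightarrow> 'n cost list set" where
  "seqs C T = {cs. length cs = T \<and> set cs \<subseteq> C}"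

text \<open>R_0(A) = Omega(T): the best regret bound rho(T) is eventually at least c*T.\<close>
definition regret_Omega_T where
  "regret_Omega_T N F M A C \<longleftrightarrow> (\<exists>c>0. \<exists>T0. \<forall>T\<ge>T0. \<exists>cs\<in>seqs C T.
      ereal (OPT_s F cs + c * real T) \<le> alg_cost N 0 M A cs)"

text \<open>CR_0^a(A) >= g for all sufficiently large T: for every additive constant K,
  for all large T, no ratio rho < g satisfies C_0(A) <= rho * OPT_d^a + K on all
  sequences of length T.\<close>
definition CR_ge_eventually where
  "CR_ge_eventually N a F M A C g \<longleftrightarrow> (\<forall>K::real. \<exists>T0. \<forall>T\<ge>T0. \<forall>\<rho><g. \<exists>cs\<in>seqs C T.
      ereal (\<rho> * OPT_d N a F cs + K) < alg_cost N 1 M A cs)"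

text \<open>CD_0^a(A) >= g*T for all sufficiently large T.\<close>
definition CD_ge_eventually where
  "CD_ge_eventually N a F M A C g \<longleftrightarrow> (\<exists>T0. \<forall>T\<ge>T0. \<forall>\<rho>< g * real T. \<exists>cs\<in>seqs C T.
      ereal (OPT_d N a F cs + \<rho>) < alg_cost N 1 M A cs)"

end

theory Submission
  imports Defs
begin

text \<open>Play on the unit cube with the two costs \<open>m x\<^sub>i\<close> and \<open>m (1 - x\<^sub>i)\<close> for a fixed
  coordinate \<open>i\<close>. Knowing the distribution of the algorithm's next decision, the adversary
  charges \<open>m x\<^sub>i\<close> if the expected \<open>x\<^sub>i\<close> is at least \<open>1/2\<close> and \<open>m (1 - x\<^sub>i)\<close> otherwise, so the
  algorithm pays at least \<open>m/2\<close> in expectation per round. The offline optimum sits on a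
  minimiser of the current cost, paying nothing for hitting and at most \<open>2 \<alpha> \<parallel>1\<parallel>\<close> for each
  move.\<close>

lemma seminorm_zero: "seminorm N \<Longrightarrow> N 0 = 0"
  unfolding seminorm_def by (metis abs_zero mult_zero_left scale_zero_left)

lemma seminorm_minus: "seminorm N \<Longrightarrow> N (- x) = N x"
proof -
  assume "seminorm N"
  then have "N ((-1) *\<^sub>R x) = \<bar>-1\<bar> * N x" unfolding seminorm_def by blast
  then show ?thesis by simp
qed

lemma seminorm_diff_le: "seminorm N \<Longrightarrow> N (x - y) \<le> N x + N y"
  unfolding seminorm_def by (metis diff_conv_add_uminus seminorm_def seminorm_minus)

lemma seminorm_nonneg: "seminorm N \<Longrightarrow> 0 \<le> N x"
  using seminorm_diff_le[of N x x] seminorm_zero[of N] by simp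

fun adaptive_seq :: "('a list \<Rightarrow> 'a) \<Rightarrow> nat \<Rightarrow> 'a list" where
  "adaptive_seq r 0 = []"
| "adaptive_seq r (Suc T) = adaptive_seq r T @ [r (adaptive_seq r T)]"

lemma length_adaptive_seq [simp]: "length (adaptive_seq r T) = T"
  by (induction T) auto

lemma take_adaptive_seq: "t \<le> T \<Longrightarrow> take t (adaptive_seq r T) = adaptive_seq r t"
  by (induction T) (auto simp: le_Suc_eq)

lemma nth_adaptive_seq: "t < T \<Longrightarrow> adaptive_seq r T ! t = r (take t (adaptive_seq r T))"
  by (induction T) (auto simp: nth_append less_Suc_eq take_adaptive_seq)

lemma set_adaptive_seq: "set (adaptive_seq r T) \<subseteq> range r"
  by (induction T) auto

lemma adaptive_seq_in_seqs: "(\<And>l. r l \<in> C) \<Longrightarrow> adaptive_seq r T \<in> seqs C T"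
  unfolding seqs_def using set_adaptive_seq by fastforce

lemma path_cost_ge_hitting_cost:
  assumes "seminorm N" "0 \<le> a"
  shows "(\<Sum>t<length cs. (cs ! t) (x t)) \<le> path_cost N a cs x"
  unfolding path_cost_def using assms seminorm_nonneg by (auto intro!: sum_mono mult_nonneg_nonneg)

lemma path_cost_nonneg:
  assumes "seminorm N" "0 \<le> a" "\<And>t. t < length cs \<Longrightarrow> 0 \<le> (cs ! t) (x t)"
  shows "0 \<le> path_cost N a cs x"
  using sum_nonneg[of "{..<length cs}" "\<lambda>t. (cs ! t) (x t)"] assms
    path_cost_ge_hitting_cost[of N a cs x] by auto

lemma alg_cost_ge_expected_hitting_cost:
  assumes N: "seminorm N" and a: "0 \<le> a"
    and nonneg: "\<And>w t. w \<in> space M \<Longrightarrow> t < length cs \<Longrightarrow> 0 \<le> (cs ! t) (A w (take t cs))"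
    and int: "\<And>t. t < length cs \<Longrightarrow> integrable M (\<lambda>w. (cs ! t) (A w (take t cs)))"
  shows "ereal (\<Sum>t<length cs. \<integral>w. (cs ! t) (A w (take t cs)) \<partial>M) \<le> alg_cost N a M A cs"
proof -
  define H where "H w = (\<Sum>t<length cs. (cs ! t) (A w (take t cs)))" for w
  have H_int: "integrable M H"
    unfolding H_def by (intro Bochner_Integration.integrable_sum) (use int in auto)
  have H_nonneg: "AE w in M. 0 \<le> H w"
    unfolding H_def using nonneg by (intro AE_I2 sum_nonneg) auto
  have "ennreal (\<integral>w. H w \<partial>M) = (\<integral>\<^sup>+ w. ennreal (H w) \<partial>M)"
    using nn_integral_eq_integral[OF H_int H_nonneg] by simp
  also have "\<dots> \<le> (\<integral>\<^sup>+ w. ennreal (path_cost N a cs (\<lambda>t. A w (take t cs))) \<partial>M)"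
    unfolding H_def by (intro nn_integral_mono ennreal_leI path_cost_ge_hitting_cost N a)
  finally have "enn2ereal (ennreal (\<integral>w. H w \<partial>M)) \<le> alg_cost N a M A cs"
    unfolding alg_cost_def by (simp add: less_eq_ennreal.rep_eq)
  moreover have "(\<integral>w. H w \<partial>M) = (\<Sum>t<length cs. \<integral>w. (cs ! t) (A w (take t cs)) \<partial>M)"
    unfolding H_def using int by (intro Bochner_Integration.integral_sum) auto
  moreover have "0 \<le> (\<integral>w. H w \<partial>M)"
    using H_nonneg by (rule integral_nonneg_AE)
  ultimately show ?thesis by simp
qed

lemma OPT_d_nonneg:
  assumes "seminorm N" "0 \<le> a" "F \<noteq> {}" "\<forall>c\<in>set cs. \<forall>x\<in>F. 0 \<le> c x"
  shows "0 \<le> OPT_d N a F cs"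
  unfolding OPT_d_def
proof (rule cINF_greatest)
  from \<open>F \<noteq> {}\<close> obtain x0 where "x0 \<in> F" by blast
  then show "{x. \<forall>t<length cs. x t \<in> F} \<noteq> {}" by auto
qed (use assms in \<open>auto intro!: path_cost_nonneg\<close>)

lemma OPT_d_le_path_cost:
  assumes "seminorm N" "0 \<le> a" "\<forall>c\<in>set cs. \<forall>x\<in>F. 0 \<le> c x" "\<And>t. t < length cs \<Longrightarrow> y t \<in> F"
  shows "OPT_d N a F cs \<le> path_cost N a cs y"
  unfolding OPT_d_def
proof (rule cINF_lower)
  show "bdd_below (path_cost N a cs ` {x. \<forall>t<length cs. x t \<in> F})"
    using assms by (intro bdd_belowI[of _ 0]) (auto intro!: path_cost_nonneg)
qed (use assms in auto)

lemma CR_ge_eventually_if_linear_gap: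
  fixes \<gamma> D b :: real
  assumes "0 < \<gamma>" "\<gamma> * D + 1 \<le> b"
    and gap: "\<And>T. \<exists>cs\<in>seqs C T. 0 \<le> OPT_d N a F cs \<and> OPT_d N a F cs \<le> D * T
                                   \<and> ereal (b * T) \<le> alg_cost N 1 M A cs"
  shows "CR_ge_eventually N a F M A C \<gamma>"
  unfolding CR_ge_eventually_def
proof
  fix K :: real
  show "\<exists>T0. \<forall>T\<ge>T0. \<forall>\<rho><\<gamma>. \<exists>cs\<in>seqs C T.
          ereal (\<rho> * OPT_d N a F cs + K) < alg_cost N 1 M A cs"
  proof (intro exI[of _ "nat \<lceil>K\<rceil> + 1"] allI impI)
    fix \<rho> :: real and T :: nat
    assume T: "nat \<lceil>K\<rceil> + 1 \<le> T" and "\<rho> < \<gamma>"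
    obtain cs where cs: "cs \<in> seqs C T" and O: "0 \<le> OPT_d N a F cs" "OPT_d N a F cs \<le> D * T"
      and alg: "ereal (b * T) \<le> alg_cost N 1 M A cs"
      using gap by blast
    have "\<rho> * OPT_d N a F cs \<le> \<gamma> * (D * T)"
      using \<open>\<rho> < \<gamma>\<close> \<open>0 < \<gamma>\<close> O by (meson less_imp_le mult_left_mono mult_right_mono order_trans)
    moreover have "K < T" "(\<gamma> * D + 1) * T \<le> b * T"
      using T assms(2) by (linarith, simp add: mult_right_mono)
    ultimately have "ereal (\<rho> * OPT_d N a F cs + K) < ereal (b * T)"
      by (simp add: algebra_simps)
    with alg cs show "\<exists>cs\<in>seqs C T. ereal (\<rho> * OPT_d N a F cs + K) < alg_cost N 1 M A cs"
      by (meson order_less_le_trans)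
  qed
qed

lemma CD_ge_eventually_if_linear_gap:
  fixes \<gamma> D b :: real
  assumes "D + \<gamma> \<le> b"
    and gap: "\<And>T. \<exists>cs\<in>seqs C T. OPT_d N a F cs \<le> D * T \<and> ereal (b * T) \<le> alg_cost N 1 M A cs"
  shows "CD_ge_eventually N a F M A C \<gamma>"
  unfolding CD_ge_eventually_def
proof (intro exI[of _ 0] allI impI)
  fix T :: nat and \<rho> :: real
  assume "\<rho> < \<gamma> * T"
  obtain cs where cs: "cs \<in> seqs C T" and O: "OPT_d N a F cs \<le> D * T"
    and alg: "ereal (b * T) \<le> alg_cost N 1 M A cs"
    using gap by blast
  have "(D + \<gamma>) * T \<le> b * T"
    using assms(1) by (simp add: mult_right_mono)
  with O \<open>\<rho> < \<gamma> * T\<close> have "ereal (OPT_d N a F cs + \<rho>) < ereal (b * T)"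
    by (simp add: algebra_simps)
  with alg cs show "\<exists>cs\<in>seqs C T. ereal (OPT_d N a F cs + \<rho>) < alg_cost N 1 M A cs"
    by (meson order_less_le_trans)
qed

lemma decision_space_unit_cube: "decision_space (cbox 0 (1 :: real ^ 'n))"
  unfolding decision_space_def
proof (intro conjI convex_box)
  have "0 \<in> cbox 0 (1 :: real ^ 'n)" by (simp add: mem_box_cart)
  then show "cbox 0 (1 :: real ^ 'n) \<noteq> {}" by blast
qed (auto simp: mem_box_cart)

definition push_down_cost :: "real \<Rightarrow> 'n::finite \<Rightarrow> 'n cost" where
  "push_down_cost m i = (\<lambda>x. m * x $ i)"

definition push_up_cost :: "real \<Rightarrow> 'n::finite \<Rightarrow> 'n cost" where
  "push_up_cost m i = (\<lambda>x. m * (1 - x $ i))"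

definition push_costs :: "real \<Rightarrow> 'n::finite \<Rightarrow> 'n cost set" where
  "push_costs m i = {push_down_cost m i, push_up_cost m i}"

lemma card_push_costs: "0 < m \<Longrightarrow> card (push_costs m i) = 2"
proof -
  assume "0 < m"
  then have "push_down_cost m i 0 \<noteq> push_up_cost m i 0"
    by (simp add: push_down_cost_def push_up_cost_def)
  then show ?thesis unfolding push_costs_def by (metis card_2_iff)
qed

lemma convex_on_push_costs: "convex S \<Longrightarrow> c \<in> push_costs m i \<Longrightarrow> convex_on S c"
  unfolding push_costs_def push_down_cost_def push_up_cost_def
  by (auto intro!: convex_onI simp: algebra_simps)

lemma push_costs_nonneg: "0 \<le> m \<Longrightarrow> c \<in> push_costs m i \<Longrightarrow> x \<in> cbox 0 1 \<Longrightarrow> 0 \<le> c x"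
  by (auto simp: push_costs_def push_down_cost_def push_up_cost_def mem_box_cart)

lemma OPT_d_push_costs_le:
  fixes cs :: "'n::finite cost list"
  assumes N: "seminorm N" and a: "0 \<le> a" and m: "0 \<le> m" and cs: "set cs \<subseteq> push_costs m i"
  shows "OPT_d N a (cbox 0 1) cs \<le> 2 * a * N 1 * length cs"
proof -
  define y where "y t = (if cs ! t = push_down_cost m i then 0 else 1 :: real ^ 'n)" for t
  have cost_nonneg: "\<forall>c\<in>set cs. \<forall>x\<in>cbox 0 1. 0 \<le> c x"
    using cs push_costs_nonneg[OF m] by blast
  have y_cube: "y t \<in> cbox 0 1" for t
    unfolding y_def by (simp add: mem_box_cart)
  have N_y: "N (y t) \<le> N 1" for t
    unfolding y_def using seminorm_zero[OF N] seminorm_nonneg[OF N] by simp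
  have "OPT_d N a (cbox 0 1) cs \<le> path_cost N a cs y"
    using OPT_d_le_path_cost[OF N a cost_nonneg y_cube] .
  also have "\<dots> \<le> (\<Sum>t<length cs. 2 * a * N 1)"
    unfolding path_cost_def
  proof (rule sum_mono)
    fix t assume "t \<in> {..<length cs}"
    then have "cs ! t \<in> push_costs m i"
      using cs nth_mem by blast
    then have "(cs ! t) (y t) = 0"
      by (auto simp: y_def push_costs_def push_down_cost_def push_up_cost_def)
    moreover have "N (if t = 0 then 0 else y (t - 1)) \<le> N 1"
      using N_y seminorm_zero[OF N] seminorm_nonneg[OF N] by simp
    then have move: "N (y t - (if t = 0 then 0 else y (t - 1))) \<le> 2 * N 1"
      using seminorm_diff_le[OF N, of "y t" "if t = 0 then 0 else y (t - 1)"] N_y[of t] by linarith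
    ultimately show "(cs ! t) (y t) + a * N (y t - (if t = 0 then 0 else y (t - 1))) \<le> 2 * a * N 1"
      using mult_left_mono[OF move a] by (simp add: mult.assoc mult.left_commute split del: if_split)
  qed
  finally show ?thesis by (simp add: mult.commute)
qed

definition biased_cost
    :: "'w measure \<Rightarrow> ('w \<Rightarrow> 'n cost list \<Rightarrow> real ^ 'n) \<Rightarrow> real \<Rightarrow> 'n::finite \<Rightarrow> 'n cost list \<Rightarrow> 'n cost" where
  "biased_cost M A m i l =
     (if 1/2 \<le> (\<integral>w. A w l $ i \<partial>M) then push_down_cost m i else push_up_cost m i)"

lemma biased_cost_mem: "biased_cost M A m i l \<in> push_costs m i"
  by (simp add: biased_cost_def push_costs_def)

lemma integrable_coordinate_unit_cube:
  assumes "online_alg (cbox 0 1) M A"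
  shows "integrable M (\<lambda>w. A w l $ i)"
proof -
  interpret prob_space M using assms unfolding online_alg_def by blast
  show ?thesis
  proof (rule integrable_const_bound[where B = 1])
    show "AE w in M. norm (A w l $ i) \<le> 1"
      using assms unfolding online_alg_def by (intro AE_I2) (auto simp: mem_box_cart)
    have "(\<lambda>w. A w l) \<in> borel_measurable M"
      using assms unfolding online_alg_def by blast
    then show "(\<lambda>w. A w l $ i) \<in> borel_measurable M"
      by (rule borel_measurable_continuous_on[rotated]) (intro continuous_intros)
  qed
qed

lemma integrable_biased_cost:
  assumes "online_alg (cbox 0 1) M A"
  shows "integrable M (\<lambda>w. biased_cost M A m i l (A w l))"
proof -
  interpret prob_space M using assms unfolding online_alg_def by blast
  show ?thesis
    using integrable_coordinate_unit_cube[OF assms]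
    by (auto simp: biased_cost_def push_down_cost_def push_up_cost_def right_diff_distrib)
qed

lemma expected_biased_cost_ge:
  assumes alg: "online_alg (cbox 0 1) M A" and m: "0 \<le> m"
  shows "m / 2 \<le> (\<integral>w. biased_cost M A m i l (A w l) \<partial>M)"
proof -
  interpret prob_space M using alg unfolding online_alg_def by blast
  define p where "p = (\<integral>w. A w l $ i \<partial>M)"
  have int: "integrable M (\<lambda>w. A w l $ i)"
    using integrable_coordinate_unit_cube[OF alg] .
  show ?thesis
  proof (cases "1/2 \<le> p")
    case True
    then have "m * (1/2) \<le> m * p" using m by (intro mult_left_mono)
    with True show ?thesis
      by (simp add: biased_cost_def push_down_cost_def p_def)
  next
    case False
    then have "m * (1/2) \<le> m * (1 - p)" using m by (intro mult_left_mono) auto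
    with False int show ?thesis
      by (simp add: biased_cost_def push_up_cost_def p_def right_diff_distrib prob_space)
  qed
qed

lemma alg_cost_adaptive_biased_cost_ge:
  assumes alg: "online_alg (cbox 0 1) M A" and N: "seminorm N" and m: "0 \<le> m"
  shows "ereal (m / 2 * T) \<le> alg_cost N 1 M A (adaptive_seq (biased_cost M A m i) T)"
proof -
  let ?cs = "adaptive_seq (biased_cost M A m i) T"
  let ?hit = "\<lambda>t w. biased_cost M A m i (take t ?cs) (A w (take t ?cs))"
  have hit: "(?cs ! t) (A w (take t ?cs)) = ?hit t w" if "t < T" for t w
    using that by (simp add: nth_adaptive_seq)
  have "(\<Sum>t<T. m / 2) \<le> (\<Sum>t<T. \<integral>w. ?hit t w \<partial>M)"
    by (intro sum_mono expected_biased_cost_ge[OF alg m])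
  then have "ereal (\<Sum>t<T. m / 2) \<le> ereal (\<Sum>t<T. \<integral>w. ?hit t w \<partial>M)"
    by simp
  also have "\<dots> = ereal (\<Sum>t<length ?cs. \<integral>w. (?cs ! t) (A w (take t ?cs)) \<partial>M)"
    using hit by simp
  also have "\<dots> \<le> alg_cost N 1 M A ?cs"
  proof (rule alg_cost_ge_expected_hitting_cost[OF N])
    show "0 \<le> (?cs ! t) (A w (take t ?cs))" if "w \<in> space M" "t < length ?cs" for w t
    proof -
      have "A w (take t ?cs) \<in> cbox 0 1"
        using that alg unfolding online_alg_def by blast
      then show ?thesis using that hit push_costs_nonneg[OF m biased_cost_mem] by simp
    qed
    show "integrable M (\<lambda>w. (?cs ! t) (A w (take t ?cs)))" if "t < length ?cs" for t
      using that hit integrable_biased_cost[OF alg] by simp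
  qed simp
  finally show ?thesis by (simp add: mult.commute)
qed

lemma biased_adversary_gap:
  assumes alg: "online_alg (cbox 0 1) M A" and N: "seminorm N" and a: "0 \<le> a" and m: "0 \<le> m"
  shows "\<exists>cs\<in>seqs (push_costs m i) T. 0 \<le> OPT_d N a (cbox 0 1) cs
           \<and> OPT_d N a (cbox 0 1) cs \<le> 2 * a * N 1 * T \<and> ereal (m / 2 * T) \<le> alg_cost N 1 M A cs"
proof (intro bexI conjI)
  let ?cs = "adaptive_seq (biased_cost M A m i) T"
  show "?cs \<in> seqs (push_costs m i) T"
    by (rule adaptive_seq_in_seqs) (rule biased_cost_mem)
  then have "set ?cs \<subseteq> push_costs m i"
    unfolding seqs_def by simp
  then show "0 \<le> OPT_d N a (cbox 0 1) ?cs"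
    using decision_space_unit_cube push_costs_nonneg[OF m]
    by (intro OPT_d_nonneg[OF N a]) (auto simp: decision_space_def)
  show "OPT_d N a (cbox 0 1) ?cs \<le> 2 * a * N 1 * T"
    using OPT_d_push_costs_le[OF N a m \<open>set ?cs \<subseteq> push_costs m i\<close>] by simp
  show "ereal (m / 2 * T) \<le> alg_cost N 1 M A ?cs"
    using alg_cost_adaptive_biased_cost_ge[OF alg N m] .
qed

theorem theorem2:
  fixes N :: "real ^ 'n \<Rightarrow> real" and \<gamma> \<alpha> :: real
  assumes "seminorm N" and "\<gamma> > 0" and "\<alpha> \<ge> 1"
  shows "\<exists>F. decision_space F \<and>
    (\<forall>(M :: 'w measure) A. online_alg F M A \<longrightarrow>
      (\<exists>C. card C = 2 \<and> (\<forall>c\<in>C. convex_on F c \<and> (\<forall>x\<in>F. 0 \<le> c x)) \<and>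
        (regret_Omega_T N F M A C \<or>
         (CR_ge_eventually N \<alpha> F M A C \<gamma> \<and> CD_ge_eventually N \<alpha> F M A C \<gamma>))))"
proof -
  define D where "D = 2 * \<alpha> * N 1"
  define m where "m = 2 * (\<gamma> * D + D + \<gamma> + 1)"
  define C where "C = push_costs m (undefined :: 'n)" \<comment> \<open>any coordinate will do\<close>
  have "0 \<le> \<alpha>" "0 \<le> D"
    using \<open>1 \<le> \<alpha>\<close> seminorm_nonneg[OF \<open>seminorm N\<close>] by (simp_all add: D_def)
  then have margin: "\<gamma> * D + 1 \<le> m / 2" "D + \<gamma> \<le> m / 2" "0 < m"
    using \<open>0 < \<gamma>\<close> mult_nonneg_nonneg[of \<gamma> D] unfolding m_def by argo+
  have gap: "\<exists>cs\<in>seqs C T. 0 \<le> OPT_d N \<alpha> (cbox 0 1) cs \<and> OPT_d N \<alpha> (cbox 0 1) cs \<le> D * T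
               \<and> ereal (m / 2 * T) \<le> alg_cost N 1 M A cs"
    if "online_alg (cbox 0 1) M A" for M :: "'w measure" and A T
    using biased_adversary_gap[OF that \<open>seminorm N\<close> \<open>0 \<le> \<alpha>\<close>, of m] margin
    unfolding C_def D_def by simp
  have "CR_ge_eventually N \<alpha> (cbox 0 1) M A C \<gamma> \<and> CD_ge_eventually N \<alpha> (cbox 0 1) M A C \<gamma>"
    if alg: "online_alg (cbox 0 1) M A" for M :: "'w measure" and A
  proof
    show "CR_ge_eventually N \<alpha> (cbox 0 1) M A C \<gamma>"
      using CR_ge_eventually_if_linear_gap[OF \<open>0 < \<gamma>\<close> margin(1) gap[OF alg]] .
    show "CD_ge_eventually N \<alpha> (cbox 0 1) M A C \<gamma>"
      by (rule CD_ge_eventually_if_linear_gap[OF margin(2)]) (use gap[OF alg] in blast)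
  qed
  moreover have "card C = 2" "\<forall>c\<in>C. convex_on (cbox 0 1) c \<and> (\<forall>x\<in>cbox 0 1. 0 \<le> c x)"
    using margin(3) push_costs_nonneg[of m] convex_on_push_costs[OF convex_box(1)]
    unfolding C_def by (auto simp: card_push_costs)
  ultimately show ?thesis
    using decision_space_unit_cube by blast
qed

end
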